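(* Let $k>1$, $g_c=k/(1+k)^2$ and $X(g)=\frac{1-\sqrt{1-4g}}2$. For $T_0\in\mathcal T_{\rm fin}$ of height $r$ with $K=|D_r(T_0)|$, set $\Lambda(T_0)=K\,k^{r-1}g_c^{|T_0|-K}X(g_c)^{K-1}$. Then for every $r\in\mathbb N$, $$\sum_{T_0\in\mathcal T_{\rm fin}:\,h(T_0)=r}\Lambda(T_0)=1.$$
   Context: Rooted planar trees: $D_r(T)$ is the ordered set of vertices at height $r$, root has exactly one child; $|T|$ = number of edges; $h(T)$ = height; $\mathcal T_{\rm fin}$ = set of finite such trees. *)

theory Defs
  imports "HOL-Analysis.Analysis"
begin

text \<open>Finite rooted planar (ordered) trees: a vertex together with the ordered list of its children.\<close>
datatype ptree = Node "ptree list"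

fun tree_edges :: "ptree \<Rightarrow> nat" where
  "tree_edges (Node ts) = (\<Sum>t\<leftarrow>ts. Suc (tree_edges t))"

fun tree_height :: "ptree \<Rightarrow> nat" where
  "tree_height (Node ts) = (if ts = [] then 0 else Suc (Max (set (map tree_height ts))))"

fun level_count :: "ptree \<Rightarrow> nat \<Rightarrow> nat" where
  "level_count (Node ts) 0 = 1"
| "level_count (Node ts) (Suc r) = (\<Sum>t\<leftarrow>ts. level_count t r)"

definition T_fin :: "ptree set" where
  "T_fin = {T. \<exists>t. T = Node [t]}"

definition g_c :: "real \<Rightarrow> real" where
  "g_c k = k / (1 + k)^2"

definition X_fun :: "real \<Rightarrow> real" where
  "X_fun g = (1 - sqrt (1 - 4 * g)) / 2"

definition Lambda :: "real \<Rightarrow> ptree \<Rightarrow> real" where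
  "Lambda k T = (let r = tree_height T; K = level_count T r in
     real K * k ^ (r - 1) * g_c k ^ (tree_edges T - K) * X_fun (g_c k) ^ (K - 1))"

end

theory Submission
  imports Defs
begin

text \<open>
  For \<open>q, C \<ge> 0\<close> let \<open>A\<^sub>h(C) = \<Sum> q\<^bsup>|t|\<^esup> C\<^bsup>|D\<^sub>h(t)|\<^esup>\<close>, summed over the planar trees \<open>t\<close> of
  height at most \<open>h\<close>. Splitting a tree at its root into the list of its subtrees gives
  \<open>A\<^sub>0(C) = C\<close> and \<open>A\<^sub>h\<^sub>+\<^sub>1(C) = 1 / (1 - q A\<^sub>h(C))\<close>. For \<open>q = g\<^sub>c\<close> the value \<open>C = (1 + k) / k\<close>
  is a fixed point of \<open>C \<mapsto> 1 / (1 - q C)\<close>, hence \<open>A\<^sub>h(C) = C\<close> for every \<open>h\<close>, and the chain rule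
  gives \<open>A'\<^sub>h\<^sub>+\<^sub>1(C) = q C\<^sup>2 A'\<^sub>h(C) = A'\<^sub>h(C) / k\<close>, so \<open>A'\<^sub>h(C) = k\<^sup>-\<^sup>h\<close>. The derivative is taken
  termwise, and only trees of height exactly \<open>h\<close> contribute to it. Since \<open>X(g\<^sub>c) = q C\<close>, the
  weight \<open>\<Lambda>\<close> of the tree obtained by attaching \<open>t\<close> below a new root is \<open>k\<^sup>h\<close> times the term
  of \<open>t\<close> in \<open>A'\<^sub>h(C)\<close>.
\<close>

lemma has_sum_SigmaI_nonneg:
  fixes f :: "'a \<times> 'b \<Rightarrow> real"
  assumes f: "\<And>x. x \<in> A \<Longrightarrow> ((\<lambda>y. f (x, y)) has_sum g x) (B x)"
    and g: "(g has_sum S) A"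
    and f_nonneg: "\<And>x y. x \<in> A \<Longrightarrow> y \<in> B x \<Longrightarrow> 0 \<le> f (x, y)"
  shows "(f has_sum S) (Sigma A B)"
  by (rule has_sum_SigmaI[OF f g summable_on_SigmaI[OF f has_sum_imp_summable[OF g] f_nonneg]])

lemma has_sum_geometric:
  fixes s :: real
  assumes "0 \<le> s" "s < 1"
  shows "((\<lambda>n. s ^ n) has_sum 1 / (1 - s)) UNIV"
  by (rule sums_nonneg_imp_has_sum) (use assms geometric_sums[of s] in auto)

lemma has_sum_geometric_deriv:
  fixes s :: real
  assumes "0 \<le> s" "s < 1"
  shows "((\<lambda>n. real n * s ^ (n - 1)) has_sum 1 / (1 - s)^2) UNIV"
proof (rule sums_nonneg_imp_has_sum)
  have "(\<lambda>n. real (Suc n) * s ^ (Suc n - 1)) sums (1 / (1 - s)^2 + real 0 * s ^ (0 - 1))"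
    using geometric_deriv_sums[of s] assms by simp
  then show "(\<lambda>n. real n * s ^ (n - 1)) sums (1 / (1 - s)^2)"
    by (subst (asm) sums_Suc_iff) simp
qed (use assms in auto)

subsection \<open>Weighted sums over lists\<close>

definition lists_of_length :: "'a set \<Rightarrow> nat \<Rightarrow> 'a list set" where
  "lists_of_length A n = {xs. set xs \<subseteq> A \<and> length xs = n}"

lemma lists_of_length_0 [simp]: "lists_of_length A 0 = {[]}"
  by (auto simp: lists_of_length_def)

lemma lists_of_length_SucE:
  assumes "xs \<in> lists_of_length A (Suc n)"
  obtains y ys where "xs = y # ys" "y \<in> A" "ys \<in> lists_of_length A n"
  using assms by (cases xs) (auto simp: lists_of_length_def)

lemma has_sum_lists_of_length_Suc:
  fixes F :: "'a \<Rightarrow> real" and G :: "'a list \<Rightarrow> real"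
  assumes F: "(F has_sum s) A" and G: "(G has_sum S) (lists_of_length A n)"
    and F_nonneg: "\<And>x. x \<in> A \<Longrightarrow> 0 \<le> F x"
    and G_nonneg: "\<And>xs. xs \<in> lists_of_length A n \<Longrightarrow> 0 \<le> G xs"
  shows "((\<lambda>xs. F (hd xs) * G (tl xs)) has_sum s * S) (lists_of_length A (Suc n))"
proof -
  have "((\<lambda>(x, xs). F x * G xs) has_sum s * S) (A \<times> lists_of_length A n)"
  proof (rule has_sum_SigmaI_nonneg)
    show "((\<lambda>xs. case (x, xs) of (x, xs) \<Rightarrow> F x * G xs) has_sum F x * S) (lists_of_length A n)" for x
      using has_sum_cmult_right[OF G] by simp
    show "((\<lambda>x. F x * S) has_sum s * S) A"
      using has_sum_cmult_left[OF F] .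
  qed (auto intro!: mult_nonneg_nonneg F_nonneg G_nonneg)
  also have "?this \<longleftrightarrow> ?thesis"
    by (rule has_sum_reindex_bij_witness[where j = "\<lambda>(x, xs). x # xs" and i = "\<lambda>ys. (hd ys, tl ys)"])
      (auto simp: lists_of_length_def length_Suc_conv)
  finally show ?thesis .
qed

lemma has_sum_lists:
  fixes F :: "'a list \<Rightarrow> real"
  assumes F: "\<And>n. (F has_sum c n) (lists_of_length A n)" and c: "(c has_sum S) UNIV"
    and F_nonneg: "\<And>xs. set xs \<subseteq> A \<Longrightarrow> 0 \<le> F xs"
  shows "(F has_sum S) (lists A)"
proof -
  have "((\<lambda>(n, xs). F xs) has_sum S) (Sigma UNIV (lists_of_length A))"
    by (rule has_sum_SigmaI_nonneg) (use F c F_nonneg in \<open>auto simp: lists_of_length_def\<close>)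
  also have "?this \<longleftrightarrow> ?thesis"
    by (rule has_sum_reindex_bij_witness[where j = "\<lambda>(n, xs). xs" and i = "\<lambda>xs. (length xs, xs)"])
      (auto simp: lists_of_length_def)
  finally show ?thesis .
qed

text \<open>The derivative of \<open>\<Prod>x\<leftarrow>xs. f x\<close> when each \<open>f x\<close> has derivative \<open>f' x\<close> (Leibniz rule).\<close>

fun prod_list_deriv :: "('a \<Rightarrow> 'b :: comm_semiring_1) \<Rightarrow> ('a \<Rightarrow> 'b) \<Rightarrow> 'a list \<Rightarrow> 'b" where
  "prod_list_deriv f f' [] = 0"
| "prod_list_deriv f f' (x # xs) = f' x * prod_list (map f xs) + f x * prod_list_deriv f f' xs"

lemma prod_list_deriv_nonneg:
  fixes f f' :: "'a \<Rightarrow> 'b :: linordered_semidom"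
  assumes "\<And>x. x \<in> set xs \<Longrightarrow> 0 \<le> f x" "\<And>x. x \<in> set xs \<Longrightarrow> 0 \<le> f' x"
  shows "0 \<le> prod_list_deriv f f' xs"
  using assms by (induction xs) (auto intro!: add_nonneg_nonneg mult_nonneg_nonneg prod_list_nonneg)

context
  fixes f f' :: "'a \<Rightarrow> real" and A :: "'a set" and s s' :: real
  assumes f: "(f has_sum s) A" and f': "(f' has_sum s') A"
    and f_nonneg: "\<And>x. x \<in> A \<Longrightarrow> 0 \<le> f x" and f'_nonneg: "\<And>x. x \<in> A \<Longrightarrow> 0 \<le> f' x"
begin

lemma prod_list_nonneg_lists: "set xs \<subseteq> A \<Longrightarrow> 0 \<le> prod_list (map f xs)"
  by (induction xs) (auto intro!: mult_nonneg_nonneg f_nonneg)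

lemma has_sum_prod_list_lists_of_length:
  "((\<lambda>xs. prod_list (map f xs)) has_sum s ^ n) (lists_of_length A n)"
proof (induction n)
  case 0
  show ?case by (rule has_sum_finiteI) simp_all
next
  case (Suc n)
  have "((\<lambda>xs. f (hd xs) * prod_list (map f (tl xs))) has_sum s * s ^ n) (lists_of_length A (Suc n))"
    by (rule has_sum_lists_of_length_Suc[OF f Suc f_nonneg])
      (auto simp: lists_of_length_def intro: prod_list_nonneg_lists)
  also have "?this \<longleftrightarrow> ?case"
    unfolding power_Suc by (rule has_sum_cong) (auto elim!: lists_of_length_SucE)
  finally show ?case .
qed

lemma has_sum_prod_list_deriv_lists_of_length:
  "(prod_list_deriv f f' has_sum real n * s' * s ^ (n - 1)) (lists_of_length A n)"
proof (induction n)
  case 0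
  show ?case by (rule has_sum_finiteI) simp_all
next
  case (Suc n)
  have nonneg: "xs \<in> lists_of_length A n \<Longrightarrow> 0 \<le> prod_list_deriv f f' xs" for xs
    by (rule prod_list_deriv_nonneg) (auto simp: lists_of_length_def intro: f_nonneg f'_nonneg)
  have "((\<lambda>xs. f' (hd xs) * prod_list (map f (tl xs))) has_sum s' * s ^ n) (lists_of_length A (Suc n))"
    by (rule has_sum_lists_of_length_Suc[OF f' has_sum_prod_list_lists_of_length f'_nonneg])
      (auto simp: lists_of_length_def intro: prod_list_nonneg_lists)
  moreover have "((\<lambda>xs. f (hd xs) * prod_list_deriv f f' (tl xs)) has_sum s * (real n * s' * s ^ (n - 1)))
      (lists_of_length A (Suc n))"
    by (rule has_sum_lists_of_length_Suc[OF f Suc f_nonneg nonneg])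
  ultimately have "((\<lambda>xs. f' (hd xs) * prod_list (map f (tl xs)) + f (hd xs) * prod_list_deriv f f' (tl xs))
      has_sum s' * s ^ n + s * (real n * s' * s ^ (n - 1))) (lists_of_length A (Suc n))"
    by (rule has_sum_add)
  also have "?this \<longleftrightarrow> (prod_list_deriv f f' has_sum s' * s ^ n + s * (real n * s' * s ^ (n - 1)))
      (lists_of_length A (Suc n))"
    by (rule has_sum_cong) (auto elim!: lists_of_length_SucE)
  also have "s' * s ^ n + s * (real n * s' * s ^ (n - 1)) = real (Suc n) * s' * s ^ (Suc n - 1)"
    by (cases n) (simp_all add: algebra_simps)
  finally show ?case .
qed

lemma has_sum_prod_list_lists:
  assumes "s < 1"
  shows "((\<lambda>xs. prod_list (map f xs)) has_sum 1 / (1 - s)) (lists A)"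
proof (rule has_sum_lists[OF has_sum_prod_list_lists_of_length has_sum_geometric])
  show "0 \<le> s"
    using f f_nonneg by (rule has_sum_nonneg)
qed (use assms in \<open>auto intro: prod_list_nonneg_lists\<close>)

lemma has_sum_prod_list_deriv_lists:
  assumes "s < 1"
  shows "(prod_list_deriv f f' has_sum s' / (1 - s)^2) (lists A)"
proof (rule has_sum_lists[OF has_sum_prod_list_deriv_lists_of_length])
  have "0 \<le> s"
    using f f_nonneg by (rule has_sum_nonneg)
  then show "((\<lambda>n. real n * s' * s ^ (n - 1)) has_sum s' / (1 - s)^2) UNIV"
    using has_sum_cmult_right[OF has_sum_geometric_deriv, of s s'] assms by (simp add: algebra_simps)
qed (auto intro: prod_list_deriv_nonneg f_nonneg f'_nonneg)

end

subsection \<open>Level generating functions of planar trees\<close>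

lemma tree_height_Node_le_Suc:
  "tree_height (Node ts) \<le> Suc h \<longleftrightarrow> (\<forall>t\<in>set ts. tree_height t \<le> h)"
  by (cases "ts = []") auto

lemma trees_height_le_0: "{t. tree_height t \<le> 0} = {Node []}"
proof -
  have "tree_height t = 0 \<longleftrightarrow> t = Node []" for t
    by (cases t) auto
  then show ?thesis by auto
qed

lemma trees_height_le_Suc: "{t. tree_height t \<le> Suc h} = Node ` lists {t. tree_height t \<le> h}"
proof -
  have "t \<in> Node ` lists {t. tree_height t \<le> h}" if "tree_height t \<le> Suc h" for t
    using that by (cases t) (auto simp: tree_height_Node_le_Suc simp del: tree_height.simps)
  then show ?thesis by (auto simp: tree_height_Node_le_Suc)
qed

lemma level_count_le_Suc_tree_edges: "level_count t h \<le> Suc (tree_edges t)"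
proof (induction t arbitrary: h)
  case (Node ts)
  show ?case
  proof (cases h)
    case (Suc h')
    have "level_count (Node ts) h = (\<Sum>t\<leftarrow>ts. level_count t h')"
      by (simp add: Suc)
    also have "\<dots> \<le> (\<Sum>t\<leftarrow>ts. Suc (tree_edges t))"
      by (rule sum_list_mono) (use Node in auto)
    finally show ?thesis by simp
  qed simp
qed

lemma level_count_eq_0_if_tree_height_less: "tree_height t < h \<Longrightarrow> level_count t h = 0"
proof (induction t arbitrary: h)
  case (Node ts)
  then obtain h' where h: "h = Suc h'"
    by (cases h) auto
  have "level_count t h' = 0" if "t \<in> set ts" for t
  proof (rule Node.IH[OF that])
    have "tree_height t \<le> Max (set (map tree_height ts))"
      using that by (intro Max_ge) auto
    then show "tree_height t < h'"
      using Node.prems h that by (auto split: if_splits)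
  qed
  then show ?case by (simp add: h sum_list_eq_0_iff)
qed

text \<open>
  The terms of \<open>A\<^sub>h(C)\<close> and of its derivative with respect to \<open>C\<close>.
\<close>

definition level_weight :: "real \<Rightarrow> real \<Rightarrow> nat \<Rightarrow> ptree \<Rightarrow> real" where
  "level_weight q C h t = q ^ tree_edges t * C ^ level_count t h"

definition level_weight_deriv :: "real \<Rightarrow> real \<Rightarrow> nat \<Rightarrow> ptree \<Rightarrow> real" where
  "level_weight_deriv q C h t = q ^ tree_edges t * real (level_count t h) * C ^ (level_count t h - 1)"

lemma level_weight_nonneg: "0 \<le> q \<Longrightarrow> 0 \<le> C \<Longrightarrow> 0 \<le> level_weight q C h t"
  by (simp add: level_weight_def)

lemma level_weight_deriv_nonneg: "0 \<le> q \<Longrightarrow> 0 \<le> C \<Longrightarrow> 0 \<le> level_weight_deriv q C h t"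
  by (simp add: level_weight_deriv_def)

lemma level_weight_Node:
  "level_weight q C (Suc h) (Node ts) = prod_list (map (\<lambda>t. q * level_weight q C h t) ts)"
  by (induction ts) (auto simp: level_weight_def power_add)

lemma of_nat_mult_power_diff_add:
  fixes C :: "'a :: comm_semiring_1"
  shows "of_nat (m + n) * C ^ (m + n - 1) = of_nat m * C ^ (m - 1) * C ^ n + of_nat n * C ^ (n - 1) * C ^ m"
proof (cases "m = 0 \<or> n = 0")
  case False
  then have "m + n - 1 = (m - 1) + n" "m + n - 1 = (n - 1) + m"
    by auto
  then have "C ^ (m + n - 1) = C ^ (m - 1) * C ^ n" "C ^ (m + n - 1) = C ^ (n - 1) * C ^ m"
    by (metis power_add)+
  then show ?thesis by (simp add: distrib_right mult.assoc)
qed auto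

lemma level_weight_deriv_Node:
  "level_weight_deriv q C (Suc h) (Node ts) =
     prod_list_deriv (\<lambda>t. q * level_weight q C h t) (\<lambda>t. q * level_weight_deriv q C h t) ts"
proof (induction ts)
  case (Cons t ts)
  define m where "m = level_count t h"
  define n where "n = level_count (Node ts) (Suc h)"
  have "level_weight_deriv q C (Suc h) (Node (t # ts))
      = q * q ^ tree_edges t * q ^ tree_edges (Node ts) * (real (m + n) * C ^ (m + n - 1))"
    by (simp add: level_weight_deriv_def m_def n_def power_add algebra_simps)
  also have "\<dots> = q * level_weight_deriv q C h t * level_weight q C (Suc h) (Node ts)
                  + q * level_weight q C h t * level_weight_deriv q C (Suc h) (Node ts)"
    unfolding of_nat_mult_power_diff_add
    by (simp add: level_weight_def level_weight_deriv_def m_def n_def algebra_simps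
             del: tree_edges.simps level_count.simps)
  finally show ?case
    using Cons.IH by (simp add: level_weight_Node mult.assoc)
qed (simp add: level_weight_deriv_def)

lemma has_sum_level_weights:
  assumes q: "0 \<le> q" and C: "0 \<le> C" and qC: "q * C < 1" and fixpoint: "1 / (1 - q * C) = C"
  shows "(level_weight q C h has_sum C) {t. tree_height t \<le> h}
       \<and> (level_weight_deriv q C h has_sum (q * C^2) ^ h) {t. tree_height t \<le> h}"
proof (induction h)
  case 0
  show ?case
    unfolding trees_height_le_0
    by (auto intro!: has_sum_finiteI simp: level_weight_def level_weight_deriv_def)
next
  case (Suc h)
  let ?f = "\<lambda>t. q * level_weight q C h t" and ?f' = "\<lambda>t. q * level_weight_deriv q C h t"
  have f: "(?f has_sum q * C) {t. tree_height t \<le> h}"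
    and f': "(?f' has_sum q * (q * C^2) ^ h) {t. tree_height t \<le> h}"
    using Suc by (auto intro: has_sum_cmult_right)
  note lists = f f' mult_nonneg_nonneg[OF q level_weight_nonneg[OF q C]]
    mult_nonneg_nonneg[OF q level_weight_deriv_nonneg[OF q C]]
  have deriv_value: "q * (q * C^2) ^ h / (1 - q * C)^2 = (q * C^2) ^ Suc h"
  proof -
    have "1 / (1 - q * C)^2 = C^2"
      using fixpoint by (metis power_divide power_one)
    then have "q * (q * C^2) ^ h / (1 - q * C)^2 = q * (q * C^2) ^ h * C^2"
      by (metis times_divide_eq_right mult_1_right)
    then show ?thesis
      by (simp add: mult_ac)
  qed
  have "((\<lambda>ts. prod_list (map ?f ts)) has_sum C) (lists {t. tree_height t \<le> h})"
    using has_sum_prod_list_lists[OF lists qC] by (simp only: fixpoint)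
  then have "(level_weight q C (Suc h) has_sum C) {t. tree_height t \<le> Suc h}"
    unfolding trees_height_le_Suc by (simp add: has_sum_reindex inj_on_def o_def level_weight_Node)
  moreover have "(prod_list_deriv ?f ?f' has_sum (q * C^2) ^ Suc h) (lists {t. tree_height t \<le> h})"
    using has_sum_prod_list_deriv_lists[OF lists qC] by (simp only: deriv_value)
  then have "(level_weight_deriv q C (Suc h) has_sum (q * C^2) ^ Suc h) {t. tree_height t \<le> Suc h}"
    unfolding trees_height_le_Suc by (simp add: has_sum_reindex inj_on_def o_def level_weight_deriv_Node)
  ultimately show ?case ..
qed

subsection \<open>The critical weights\<close>

lemma X_fun_g_c:
  fixes k :: real
  assumes "1 < k"
  shows "X_fun (g_c k) = 1 / (1 + k)"
proof -
  have "1 - 4 * g_c k = ((1 + k)^2 - 4 * k) / (1 + k)^2"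
    using assms by (simp add: g_c_def field_simps)
  also have "\<dots> = ((k - 1) / (k + 1))^2"
    by (simp add: power_divide power2_eq_square algebra_simps)
  finally have "sqrt (1 - 4 * g_c k) = (k - 1) / (k + 1)"
    using assms by simp
  then show ?thesis
    using assms by (simp add: X_fun_def field_simps)
qed

lemma g_c_critical_point:
  fixes k :: real
  assumes "1 < k"
  shows "g_c k * ((1 + k) / k) = 1 / (1 + k)" and "g_c k * ((1 + k) / k)^2 = 1 / k"
    and "1 / (1 - g_c k * ((1 + k) / k)) = (1 + k) / k"
proof -
  have k: "k \<noteq> 0" "1 + k \<noteq> 0"
    using assms by auto
  show qC: "g_c k * ((1 + k) / k) = 1 / (1 + k)" "g_c k * ((1 + k) / k)^2 = 1 / k"
    using k by (simp_all add: g_c_def power_divide field_simps, simp_all add: power2_eq_square algebra_simps)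
  show "1 / (1 - g_c k * ((1 + k) / k)) = (1 + k) / k"
    using k unfolding qC by (simp add: field_simps)
qed

lemma Lambda_Node_eq:
  fixes k :: real
  assumes "1 < k" and "tree_height t = h"
  shows "Lambda k (Node [t]) = k ^ h * level_weight_deriv (g_c k) ((1 + k) / k) h t"
proof -
  define q C K e where "q = g_c k" and "C = (1 + k) / k" and "K = level_count t h" and "e = tree_edges t"
  have X: "X_fun (g_c k) = g_c k * C"
    using X_fun_g_c g_c_critical_point assms(1) by (simp add: C_def)
  have "Lambda k (Node [t]) = real K * k ^ h * q ^ (Suc e - K) * (q * C) ^ (K - 1)"
    using assms(2) by (simp add: Lambda_def K_def e_def q_def X Let_def)
  also have "\<dots> = k ^ h * (q ^ e * real K * C ^ (K - 1))"
  proof (cases "K = 0")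
    case False
    moreover have "K \<le> Suc e"
      unfolding K_def e_def by (rule level_count_le_Suc_tree_edges)
    ultimately have "q ^ (Suc e - K) * q ^ (K - 1) = q ^ e"
      by (simp flip: power_add)
    then show ?thesis
      by (simp add: power_mult_distrib algebra_simps)
  qed simp
  finally show ?thesis
    by (simp add: level_weight_deriv_def q_def C_def K_def e_def)
qed

theorem mainTheorem6:
  fixes k :: real and r :: nat
  assumes "k > 1" and "r \<ge> 1"
  shows "(Lambda k has_sum 1) {T \<in> T_fin. tree_height T = r}"
proof -
  obtain h where r: "r = Suc h"
    using assms(2) by (cases r) auto
  define q C where "q = g_c k" and "C = (1 + k) / k"
  have "0 \<le> q" "0 \<le> C" "q * C < 1"
    using assms(1) g_c_critical_point(1) by (auto simp: q_def C_def g_c_def)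
  then have "(level_weight_deriv q C h has_sum (q * C^2) ^ h) {t. tree_height t \<le> h}"
    using has_sum_level_weights g_c_critical_point(3)[OF assms(1)] by (auto simp: q_def C_def)
  also have "?this \<longleftrightarrow> (level_weight_deriv q C h has_sum (1 / k) ^ h) {t. tree_height t = h}"
    unfolding q_def C_def g_c_critical_point(2)[OF assms(1)]
    by (rule has_sum_cong_neutral)
      (auto simp: level_weight_deriv_def level_count_eq_0_if_tree_height_less)
  finally have "((\<lambda>t. k ^ h * level_weight_deriv q C h t) has_sum k ^ h * (1 / k) ^ h)
      {t. tree_height t = h}"
    by (rule has_sum_cmult_right)
  also have "k ^ h * (1 / k) ^ h = 1"
    using assms(1) by (simp add: power_divide)
  finally have "((\<lambda>t. k ^ h * level_weight_deriv q C h t) has_sum 1) {t. tree_height t = h}" .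
  also have "?this \<longleftrightarrow> ?thesis"
    by (rule has_sum_reindex_bij_witness[where j = "\<lambda>t. Node [t]" and i = "\<lambda>T. case T of Node ts \<Rightarrow> hd ts"])
      (auto simp: T_fin_def r Lambda_Node_eq[OF assms(1)] q_def C_def)
  finally show ?thesis .
qed

end
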